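(* Let $A$ be a $3\times 3$ matrix with real entries whose characteristic polynomial is $P(x)=x^3-bx^2+cx-d$, where $b>1$, $c>0$, $d\in(0,1)$, $1-d<b-c$ and $bc-d>0$. Then: (i) All the real roots of $P$ are located in the interval $(0,b)$. (ii) $P$ has at least one real root in the interval $(1,b)$. (iii) If $P$ has two (non-real) complex roots, then both are located in the unit disk. (iv) If all the roots of $P$ are real, then $P$ has at least one real root in the interval $(0,1)$. (v) $P$ has a single root in the interval $(1,b)$.
   Context: The unit disk means the open set $\{z\in\mathbb{C}:\ |z|<1\}$. *)

theory Defs
  imports "Jordan_Normal_Form.Char_Poly"
begin

end

theory Submission
  imports Defs
begin

text \<open>The sign changes \<open>P(1) = 1 - b + c - d < 0 < b c - d = P(b)\<close> give a root \<open>r \<in> (1, b)\<close>.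
  Whenever two further roots \<open>s, t\<close> (real or complex) are known, \<open>P(y) = (y - r)(y - s)(y - t)\<close>,
  so \<open>d = r s t\<close> with \<open>r > 1\<close> and \<open>d < 1\<close> forces \<open>|s t| < 1\<close>: for a conjugate pair this
  puts both in the unit disk, and for real roots one of them lies in \<open>(0, 1)\<close>. A second root
  \<open>s > 1\<close> is impossible, since \<open>P(1) = (1 - r)(1 - s)(1 - t) < 0\<close> would force \<open>t > 1\<close> and
  hence \<open>d > 1\<close>.\<close>

definition cubic :: "'a::comm_ring_1 \<Rightarrow> 'a \<Rightarrow> 'a \<Rightarrow> 'a \<Rightarrow> 'a" where
  "cubic b c d x = x^3 - b * x^2 + c * x - d"

lemma poly_cubic: "poly [:-d, c, -b, 1:] x = cubic b c d x"
  by (simp add: cubic_def algebra_simps power2_eq_square power3_eq_cube)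

lemma cubic_of_real:
  "cubic (of_real b) (of_real c) (of_real d) (of_real x :: 'a::{real_algebra_1, comm_ring_1})
    = of_real (cubic b c d x)"
  by (simp add: cubic_def)

lemma cnj_cubic:
  "cnj (cubic (of_real b) (of_real c) (of_real d) z) = cubic (of_real b) (of_real c) (of_real d) (cnj z)"
  by (simp add: cubic_def)

lemma cubic_at_0: "cubic b c d 0 = - d"
  by (simp add: cubic_def)

lemma cubic_split_root:
  assumes "cubic b c d r = 0"
  shows "cubic b c d y = (y - r) * (y^2 - (b - r) * y + (c - r * (b - r)))"
  using assms by (simp add: cubic_def algebra_simps power2_eq_square power3_eq_cube)

lemma cubic_split_roots:
  assumes r: "cubic b c d r = 0" and s: "s^2 - (b - r) * s + (c - r * (b - r)) = 0"
  shows "cubic b c d y = (y - r) * (y - s) * (y - (b - r - s))"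
proof -
  have "y^2 - (b - r) * y + (c - r * (b - r)) = (y - s) * (y - (b - r - s))"
    using s by (simp add: algebra_simps power2_eq_square)
  then show ?thesis using cubic_split_root[OF r, of y] by simp
qed

lemma cubic_split_distinct_roots:
  fixes r s :: "'a::idom"
  assumes r: "cubic b c d r = 0" and s: "cubic b c d s = 0" and "s \<noteq> r"
  shows "cubic b c d y = (y - r) * (y - s) * (y - (b - r - s))"
proof (rule cubic_split_roots[OF r])
  show "s^2 - (b - r) * s + (c - r * (b - r)) = 0"
    using cubic_split_root[OF r, of s] s \<open>s \<noteq> r\<close> by simp
qed

lemma cubic_real_root_bounds:
  fixes b c d x :: real
  assumes "0 \<le> b" "0 \<le> c" "0 < d" "d < b * c" and root: "cubic b c d x = 0"
  shows "0 < x \<and> x < b"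
proof (rule ccontr)
  assume "\<not> (0 < x \<and> x < b)"
  then consider "x \<le> 0" | "b \<le> x" by linarith
  then show False
  proof cases
    case 1
    then have "x^3 \<le> 0" "c * x \<le> 0"
      using \<open>0 \<le> c\<close> by (simp_all add: power3_eq_cube mult_nonneg_nonpos mult_nonpos_nonpos
          mult_nonneg_nonpos2 zero_le_mult_iff)
    moreover have "0 \<le> b * x^2" using \<open>0 \<le> b\<close> by simp
    ultimately have "cubic b c d x < 0" using \<open>0 < d\<close> unfolding cubic_def by linarith
    then show False using root by simp
  next
    case 2
    then have "0 \<le> x^2 * (x - b)" "b * c \<le> x * c" using \<open>0 \<le> c\<close> by (simp_all add: mult_right_mono)
    then show False
      using root \<open>d < b * c\<close> by (simp add: cubic_def algebra_simps power2_eq_square power3_eq_cube)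
  qed
qed

lemma cubic_root_between_1_b:
  fixes b c d :: real
  assumes "1 < b" "1 - d < b - c" "d < b * c"
  obtains r where "1 < r" "r < b" "cubic b c d r = 0"
proof -
  have "poly [:-d, c, -b, 1:] 1 < 0" "0 < poly [:-d, c, -b, 1:] b"
    using assms by (simp_all add: poly_cubic cubic_def power2_eq_square power3_eq_cube)
  then have "\<exists>x. 1 < x \<and> x < b \<and> poly [:-d, c, -b, 1:] x = 0"
    by (intro poly_IVT_pos[OF \<open>1 < b\<close>])
  then show ?thesis using that unfolding poly_cubic by blast
qed

lemma cubic_root_gt_1_unique:
  fixes b c d r s :: real
  assumes "1 - d < b - c" "d < 1"
    and r: "1 < r" "cubic b c d r = 0" and s: "1 < s" "cubic b c d s = 0"
  shows "s = r"
proof (rule ccontr)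
  assume "s \<noteq> r"
  define t where "t = b - r - s"
  have split: "cubic b c d y = (y - r) * (y - s) * (y - t)" for y
    unfolding t_def using cubic_split_distinct_roots[OF r(2) s(2) \<open>s \<noteq> r\<close>] .
  have "(1 - r) * (1 - s) * (1 - t) < 0"
    using split[of 1] \<open>1 - d < b - c\<close> by (simp add: cubic_def)
  moreover have "0 < (1 - r) * (1 - s)" using r s by (simp add: mult_neg_neg)
  ultimately have "1 < t" using mult_nonneg_nonneg[of "(1 - r) * (1 - s)" "1 - t"] by linarith
  then have "1 < r * s * t" using r s by (simp add: less_1_mult)
  moreover have "d = r * s * t" using split[of 0] by (simp add: cubic_at_0)
  ultimately show False using \<open>d < 1\<close> by simp
qed

lemma cubic_nonreal_root_in_unit_disk:
  fixes b c d r :: real and z :: complex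
  assumes "d < 1" and r: "1 < r" "cubic b c d r = 0"
    and z: "cubic (of_real b) (of_real c) (of_real d) z = 0" "z \<notin> \<real>"
  shows "cmod z < 1"
proof -
  let ?g = "cubic (of_real b) (of_real c) (of_real d)"
  define t where "t = of_real b - z - cnj z"
  have "?g (cnj z) = 0" using z(1) cnj_cubic[of b c d z] by simp
  moreover have "cnj z \<noteq> z" using z(2) Reals_cnj_iff by blast
  ultimately have split: "?g y = (y - z) * (y - cnj z) * (y - t)" for y
    unfolding t_def by (rule cubic_split_distinct_roots[OF z(1)])
  have "of_real r \<noteq> z" "of_real r \<noteq> cnj z"
    using z(2) by (metis Reals_of_real complex_cnj_cnj complex_cnj_complex_of_real)+
  then have "of_real r = t" using split[of "of_real r"] r(2) by (simp add: cubic_of_real)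
  have "of_real d = z * cnj z * t" using split[of 0] by (simp add: cubic_at_0)
  also have "\<dots> = of_real ((cmod z)^2 * r)"
    by (simp only: of_real_mult complex_norm_square \<open>of_real r = t\<close>)
  finally have "d = (cmod z)^2 * r" by (simp only: of_real_eq_iff)
  moreover have "(cmod z)^2 \<le> (cmod z)^2 * r"
    using mult_left_mono[of 1 r "(cmod z)^2"] \<open>1 < r\<close> by simp
  ultimately have "(cmod z)^2 < 1" using \<open>d < 1\<close> by linarith
  then show ?thesis by (simp add: power_less_one_iff)
qed

lemma complex_quadratic_has_root: "\<exists>z::complex. z^2 - p * z + q = 0"
proof
  define w where "w = csqrt (p^2 - 4 * q)"
  define z where "z = (p + w) / 2"
  have "2 * z = p + w" by (simp add: z_def)
  have "4 * (z^2 - p * z + q) = (2 * z)^2 - 2 * p * (2 * z) + 4 * q"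
    by (simp add: algebra_simps power2_eq_square)
  also have "\<dots> = w^2 - (p^2 - 4 * q)"
    unfolding \<open>2 * z = p + w\<close> by (simp add: power2_eq_square algebra_simps)
  also have "\<dots> = 0"
    by (simp add: w_def)
  finally show "z^2 - p * z + q = 0" by (metis mult_eq_0_iff zero_neq_numeral)
qed

lemma cubic_real_roots_root_in_0_1:
  fixes b c d r :: real
  assumes "0 \<le> b" "0 \<le> c" "0 < d" "d < b * c" "d < 1" and r: "1 < r" "cubic b c d r = 0"
    and real_roots: "\<And>z::complex. cubic (of_real b) (of_real c) (of_real d) z = 0 \<Longrightarrow> z \<in> \<real>"
  obtains x where "0 < x" "x < 1" "cubic b c d x = 0"
proof -
  let ?q = "\<lambda>y. y^2 - (b - r) * y + (c - r * (b - r))"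
  let ?rr = "of_real r :: complex"
  obtain z where z: "z^2 - (of_real b - ?rr) * z + (of_real c - ?rr * (of_real b - ?rr)) = 0"
    using complex_quadratic_has_root by blast
  have "cubic (of_real b) (of_real c) (of_real d) ?rr = 0"
    using r(2) by (simp add: cubic_of_real)
  from cubic_split_root[OF this, of z] z
  have "cubic (of_real b) (of_real c) (of_real d) z = 0" by simp
  then have "z \<in> \<real>" by (rule real_roots)
  then obtain s where "z = of_real s" by (rule Reals_cases)
  with z have "of_real (?q s) = (0 :: complex)" by simp
  then have "?q s = 0" by (simp only: of_real_eq_0_iff)
  define t where "t = b - r - s"
  have split: "cubic b c d y = (y - r) * (y - s) * (y - t)" for y
    unfolding t_def by (rule cubic_split_roots[OF r(2) \<open>?q s = 0\<close>])
  have "0 < s" "0 < t"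
    using cubic_real_root_bounds[OF assms(1-4)] split[of s] split[of t] by simp_all
  have "d = r * (s * t)" using split[of 0] by (simp add: cubic_at_0)
  moreover have "s * t < r * (s * t)" using \<open>1 < r\<close> \<open>0 < s\<close> \<open>0 < t\<close> by simp
  ultimately have "s * t < 1" using \<open>d < 1\<close> by linarith
  have "s < 1 \<or> t < 1"
  proof (rule ccontr)
    assume "\<not> (s < 1 \<or> t < 1)"
    then have "1 * 1 \<le> s * t" by (intro mult_mono) auto
    with \<open>s * t < 1\<close> show False by simp
  qed
  then show ?thesis using that \<open>0 < s\<close> \<open>0 < t\<close> split[of s] split[of t] by auto
qed

theorem proposition4p1:
  fixes A :: "real mat" and b c d :: real
  assumes A: "A \<in> carrier_mat 3 3"
    and P: "char_poly A = [:-d, c, -b, 1:]"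
    and hb: "b > 1" and hc: "c > 0" and hd0: "0 < d" and hd1: "d < 1"
    and h1: "1 - d < b - c" and h2: "b * c - d > 0"
  shows "(\<forall>x::real. poly (char_poly A) x = 0 \<longrightarrow> 0 < x \<and> x < b)
    \<and> (\<exists>x::real. 1 < x \<and> x < b \<and> poly (char_poly A) x = 0)
    \<and> ((\<exists>z::complex. poly (map_poly complex_of_real (char_poly A)) z = 0 \<and> z \<notin> \<real>) \<longrightarrow>
         (\<forall>z::complex. poly (map_poly complex_of_real (char_poly A)) z = 0 \<and> z \<notin> \<real> \<longrightarrow> cmod z < 1))
    \<and> ((\<forall>z::complex. poly (map_poly complex_of_real (char_poly A)) z = 0 \<longrightarrow> z \<in> \<real>) \<longrightarrow>
         (\<exists>x::real. 0 < x \<and> x < 1 \<and> poly (char_poly A) x = 0))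
    \<and> (\<exists>!x::real. 1 < x \<and> x < b \<and> poly (char_poly A) x = 0)"
proof -
  have real_poly: "poly (char_poly A) x = cubic b c d x" for x
    by (simp only: P poly_cubic)
  have complex_poly: "poly (map_poly complex_of_real (char_poly A)) z
      = cubic (of_real b) (of_real c) (of_real d) z" for z
  proof -
    have "map_poly complex_of_real (char_poly A) = [:- of_real d, of_real c, - of_real b, 1:]"
      by (simp add: P map_poly_pCons)
    then show ?thesis by (simp only: poly_cubic)
  qed
  have bounds: "0 \<le> b" "0 \<le> c" "0 < d" "d < b * c" using hb hc hd0 h2 by simp_all
  obtain r where r: "1 < r" "r < b" "cubic b c d r = 0"
    using cubic_root_between_1_b[OF hb h1 \<open>d < b * c\<close>] .
  show ?thesis
    unfolding real_poly complex_poly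
  proof (intro conjI impI allI)
    show "\<exists>x. 1 < x \<and> x < b \<and> cubic b c d x = 0" using r by blast
    show "\<exists>!x. 1 < x \<and> x < b \<and> cubic b c d x = 0"
      using r cubic_root_gt_1_unique[OF h1 hd1 r(1,3)] by blast
    show "\<exists>x. 0 < x \<and> x < 1 \<and> cubic b c d x = 0"
      if "\<forall>z::complex. cubic (of_real b) (of_real c) (of_real d) z = 0 \<longrightarrow> z \<in> \<real>"
      using cubic_real_roots_root_in_0_1[OF bounds hd1 r(1,3)] that by blast
  qed (use cubic_real_root_bounds[OF bounds] cubic_nonreal_root_in_unit_disk[OF hd1 r(1,3)] in auto)
qed

end
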